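(* Let $N_f\ge1$ be an integer, $\beta>0$, $\lambda>0$, and let $p_r(i)=i^{-\beta}/\sum_{k=1}^{N_f}k^{-\beta}$. For $r_c>0$ let $p_c^*(i)=p_c^*(i;r_c)$, $i=1,\dots,N_f$, be an optimal solution of $\max \sum_{i=1}^{N_f}p_r(i)(1-e^{-\lambda p_c(i)\pi r_c^2})$ subject to $\sum_i p_c(i)=1$, $p_c(i)\ge0$, and define the maximal offloading ratio \[ p_o(p_c^*,r_c)=\sum_{i=1}^{N_f}p_r(i)\left(1-e^{-\lambda p_c^*(i)\pi r_c^2}\right). \] Let $F,W,\sigma_0^2,\eta,P_c,P_{\max},\alpha>0$, and for $r>0$ let $E_c^*(r)$ be the minimum value of \[ \frac{F}{W\log_2\!\left(1+\frac{P_t r^{-\alpha}}{\sigma_0^2}\right)}\left(\frac{1}{\eta}P_t+P_c\right)\quad\text{over } 0<P_t\le P_{\max}. \] With $f(p,r)=2\pi r\lambda p\,e^{-\lambda p\pi r^2}$, define the minimal average energy cost \[ \bar E_c^*(r_c)=\sum_{i=1}^{N_f}p_r(i)\int_0^{r_c}E_c^*(r)\,f(p_c^*(i;r_c),r)\,dr. \] Then both $p_o(p_c^*,r_c)$ and $\bar E_c^*(r_c)$ are increasing functions of the collaboration distance $r_c$.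
   Context: Interpretation: users form a Poisson point process of density $\lambda$, file requests follow a Zipf distribution over $N_f$ files, users cache files with the optimized probabilities $p_c^*(i)$, a user is served via a D2D link only by a caching user within distance $r_c$ (the collaboration distance), $f(p_c^*(i),r)$ is the density of the distance to the nearest user caching file $i$, and $E_c^*(r)$ is the minimal energy for a transmitter to send a file over a link of length $r$. *)

theory Defs
  imports "HOL-Analysis.Analysis"
begin

definition zipf :: "nat \<Rightarrow> real \<Rightarrow> nat \<Rightarrow> real" where
  "zipf Nf \<beta> i = real i powr (-\<beta>) / (\<Sum>k=1..Nf. real k powr (-\<beta>))"

definition offload :: "nat \<Rightarrow> real \<Rightarrow> real \<Rightarrow> (nat \<Rightarrow> real) \<Rightarrow> real \<Rightarrow> real" where
  "offload Nf \<beta> lam pc rc =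
     (\<Sum>i=1..Nf. zipf Nf \<beta> i * (1 - exp (- lam * pc i * pi * rc^2)))"

definition feasible_cache :: "nat \<Rightarrow> (nat \<Rightarrow> real) \<Rightarrow> bool" where
  "feasible_cache Nf pc \<longleftrightarrow> (\<forall>i\<in>{1..Nf}. pc i \<ge> 0) \<and> (\<Sum>i=1..Nf. pc i) = 1"

definition opt_cache :: "nat \<Rightarrow> real \<Rightarrow> real \<Rightarrow> real \<Rightarrow> (nat \<Rightarrow> real) \<Rightarrow> bool" where
  "opt_cache Nf \<beta> lam rc pc \<longleftrightarrow> feasible_cache Nf pc \<and>
     (\<forall>q. feasible_cache Nf q \<longrightarrow> offload Nf \<beta> lam q rc \<le> offload Nf \<beta> lam pc rc)"

definition energy :: "real \<Rightarrow> real \<Rightarrow> real \<Rightarrow> real \<Rightarrow> real \<Rightarrow> real \<Rightarrow> real \<Rightarrow> real \<Rightarrow> real" where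
  "energy F W sigma2 \<eta> Pc \<alpha> r Pt =
     F / (W * log 2 (1 + Pt * r powr (-\<alpha>) / sigma2)) * (Pt / \<eta> + Pc)"

definition min_energy :: "real \<Rightarrow> real \<Rightarrow> real \<Rightarrow> real \<Rightarrow> real \<Rightarrow> real \<Rightarrow> real \<Rightarrow> real \<Rightarrow> real" where
  "min_energy F W sigma2 \<eta> Pc Pmax \<alpha> r =
     Inf ((\<lambda>Pt. energy F W sigma2 \<eta> Pc \<alpha> r Pt) ` {0<..Pmax})"

text \<open>Density of the distance to the nearest user caching a file cached with probability p.\<close>
definition dist_density :: "real \<Rightarrow> real \<Rightarrow> real \<Rightarrow> real" where
  "dist_density lam p r = 2 * pi * r * lam * p * exp (- lam * p * pi * r^2)"

definition avg_energy ::
  "nat \<Rightarrow> real \<Rightarrow> real \<Rightarrow> real \<Rightarrow> real \<Rightarrow> real \<Rightarrow> real \<Rightarrow> real \<Rightarrow> real \<Rightarrow> real \<Rightarrow>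
   (nat \<Rightarrow> real) \<Rightarrow> real \<Rightarrow> real" where
  "avg_energy Nf \<beta> lam F W sigma2 \<eta> Pc Pmax \<alpha> pc rc =
     (\<Sum>i=1..Nf. zipf Nf \<beta> i *
        integral {0..rc} (\<lambda>r. min_energy F W sigma2 \<eta> Pc Pmax \<alpha> r * dist_density lam (pc i) r))"

end

theory Submission
  imports Defs
begin

text \<open>An optimal caching distribution is a water-filling solution: with x = lam pi rc^2 there is
  a level L such that x pc(i) = max 0 (ln pr(i) - L), and the total volume poured is x. The
  offloading ratio increases simply because the optimum at a larger distance dominates the old
  distribution evaluated at that distance. For the energy, the average cost is the integral of
  the increasing function E_c^* against the Zipf mixture of the nearest-cacher densities, and the
  tail mass of that mixture on [tau, rc] is an explicit function of tau and of the water level.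
  Differentiating in the level (a Chebyshev sum inequality gives the sign) shows that these tails
  grow with rc. Integrating an increasing nonnegative weight against measures with larger tails
  gives a larger result, which follows by approximating the weight by staircase functions.\<close>

section \<open>Water-filling structure of optimal caching\<close>

lemma zipf_pos: "i \<in> {1..Nf} \<Longrightarrow> zipf Nf \<beta> i > 0"
  unfolding zipf_def by (intro divide_pos_pos sum_pos) auto

lemma offload_eq_sum: "offload Nf \<beta> lam pc rc =
   (\<Sum>i=1..Nf. zipf Nf \<beta> i * (1 - exp (- (pc i * (lam * pi * rc^2)))))"
  unfolding offload_def by (simp add: algebra_simps)

lemma opt_cache_marginal_le:
  assumes lam: "lam > 0" and rc: "rc > 0" and opt: "opt_cache Nf \<beta> lam rc p"
    and i: "i \<in> {1..Nf}" and j: "j \<in> {1..Nf}" and pi0: "p i > 0"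
  shows "zipf Nf \<beta> j * exp (-(p j * (lam * pi * rc^2))) \<le> zipf Nf \<beta> i * exp (-(p i * (lam * pi * rc^2)))"
proof (rule ccontr)
  define x where "x = lam * pi * rc^2"
  have x: "x > 0" using lam rc by (simp add: x_def)
  define mi where "mi = zipf Nf \<beta> i * exp (-(p i * x))"
  define mj where "mj = zipf Nf \<beta> j * exp (-(p j * x))"
  assume "\<not> ?thesis"
  hence mji: "mi < mj" by (simp add: mi_def mj_def x_def)
  have mi0: "mi > 0" using zipf_pos[OF i] by (simp add: mi_def)
  have ij: "i \<noteq> j" using mji by (auto simp: mi_def mj_def)
  text \<open>Moving a small mass \<epsilon> from file i to the file j of larger marginal gain improves the objective.\<close>
  define \<epsilon> where "\<epsilon> = min (p i) (ln (mj / mi) / (2 * x))"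
  have lnpos: "ln (mj / mi) > 0" using mji mi0 by simp
  have eps: "\<epsilon> > 0" "\<epsilon> \<le> p i" using pi0 lnpos x by (auto simp: \<epsilon>_def)
  have "\<epsilon> * x < ln (mj / mi)"
    using x lnpos by (simp add: \<epsilon>_def min_def field_simps split: if_splits)
  hence "exp (\<epsilon> * x) < mj / mi" using mji mi0 by (metis divide_pos_pos exp_less_mono exp_ln less_trans)
  hence zr: "exp (\<epsilon> * x) * mi < mj" using mi0 by (simp add: field_simps)
  define q where "q k = p k + (if k = j then \<epsilon> else 0) - (if k = i then \<epsilon> else 0)" for k
  have feas: "feasible_cache Nf p" using opt by (simp add: opt_cache_def)
  have "feasible_cache Nf q"
    using feas eps ij i j
    by (auto simp: feasible_cache_def q_def sum.distrib sum_subtractf)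
  hence le: "offload Nf \<beta> lam q rc \<le> offload Nf \<beta> lam p rc" using opt by (simp add: opt_cache_def)
  define h where "h k = zipf Nf \<beta> k * (exp (-(p k * x)) - exp (-(q k * x)))" for k
  have "offload Nf \<beta> lam q rc - offload Nf \<beta> lam p rc = (\<Sum>k=1..Nf. h k)"
    unfolding offload_eq_sum h_def x_def[symmetric] by (simp add: sum_subtractf[symmetric] algebra_simps)
  also have "\<dots> = h i + h j"
    using i j ij by (subst sum.mono_neutral_right[of _ "{i, j}"]) (auto simp: h_def q_def)
  also have "\<dots> = (exp (\<epsilon> * x) - 1) * (mj - exp (\<epsilon> * x) * mi) / exp (\<epsilon> * x)"
    using ij by (simp add: h_def q_def mi_def mj_def field_simps exp_minus flip: exp_add)
  also have "\<dots> > 0" using zr eps x by (intro divide_pos_pos mult_pos_pos) auto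
  finally show False using le by simp
qed

definition water_fill :: "('a \<Rightarrow> real) \<Rightarrow> real \<Rightarrow> 'a \<Rightarrow> real" where
  "water_fill pr L i = max 0 (ln (pr i) - L)"

definition water_volume :: "'a set \<Rightarrow> ('a \<Rightarrow> real) \<Rightarrow> real \<Rightarrow> real" where
  "water_volume I pr L = (\<Sum>i\<in>I. water_fill pr L i)"

definition water_active :: "'a set \<Rightarrow> ('a \<Rightarrow> real) \<Rightarrow> real \<Rightarrow> 'a set" where
  "water_active I pr L = {i\<in>I. ln (pr i) > L}"

lemma opt_cache_water_filling:
  assumes lam: "lam > 0" and rc: "rc > 0" and opt: "opt_cache Nf \<beta> lam rc p"
  shows "\<exists>L. (\<forall>i\<in>{1..Nf}. p i * (lam * pi * rc^2) = water_fill (zipf Nf \<beta>) L i)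
             \<and> water_volume {1..Nf} (zipf Nf \<beta>) L = lam * pi * rc^2"
proof -
  define x where "x = lam * pi * rc^2"
  define m where "m k = zipf Nf \<beta> k * exp (-(p k * x))" for k
  have feas: "feasible_cache Nf p" using opt by (simp add: opt_cache_def)
  have "\<exists>i0\<in>{1..Nf}. p i0 > 0"
  proof (rule ccontr)
    assume "\<not> (\<exists>i0\<in>{1..Nf}. p i0 > 0)"
    hence "\<forall>i\<in>{1..Nf}. p i = 0" using feas unfolding feasible_cache_def by force
    thus False using feas by (simp add: feasible_cache_def)
  qed
  then obtain i0 where i0: "i0 \<in> {1..Nf}" "p i0 > 0" by blast
  define L where "L = ln (m i0)"
  have lnm: "ln (m k) = ln (zipf Nf \<beta> k) - p k * x" if "k \<in> {1..Nf}" for k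
    using zipf_pos[OF that, of \<beta>] unfolding m_def by (simp add: ln_mult)
  have step: "m j \<le> m i" if "i \<in> {1..Nf}" "j \<in> {1..Nf}" "p i > 0" for i j
    unfolding m_def x_def by (rule opt_cache_marginal_le[OF lam rc opt that])
  have fill: "p i * x = water_fill (zipf Nf \<beta>) L i" if i: "i \<in> {1..Nf}" for i
  proof (cases "p i > 0")
    case True
    have "m i = m i0" using step[OF i i0(1) True] step[OF i0(1) i i0(2)] by simp
    moreover have "p i * x > 0" using True lam rc by (simp add: x_def)
    ultimately show ?thesis using lnm[OF i] by (simp add: water_fill_def L_def)
  next
    case False
    hence "p i = 0" using feas i unfolding feasible_cache_def by force
    moreover have "ln (m i) \<le> L"
      using step[OF i0(1) i i0(2)] zipf_pos[OF i, of \<beta>] unfolding L_def m_def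
      by (intro ln_mono) auto
    ultimately show ?thesis using lnm[OF i] by (simp add: water_fill_def)
  qed
  have "water_volume {1..Nf} (zipf Nf \<beta>) L = (\<Sum>i=1..Nf. p i) * x"
    unfolding water_volume_def sum_distrib_right by (rule sum.cong) (auto simp: fill)
  with fill feas show ?thesis unfolding x_def by (auto simp: feasible_cache_def)
qed

section \<open>The tail function is antitone in the water level\<close>

lemma sum_mult_deviation_nonneg:
  fixes u w :: "'a \<Rightarrow> real"
  assumes "finite A"
    and "\<And>i. i \<in> A \<Longrightarrow> (w i - c) * (real (card A) * u i - (\<Sum>j\<in>A. u j)) \<ge> 0"
  shows "(\<Sum>i\<in>A. w i * (real (card A) * u i - (\<Sum>j\<in>A. u j))) \<ge> 0"
proof -
  let ?d = "\<lambda>i. real (card A) * u i - (\<Sum>j\<in>A. u j)"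
  have "(\<Sum>i\<in>A. ?d i) = 0" by (simp add: sum_subtractf sum_distrib_left)
  hence "(\<Sum>i\<in>A. w i * ?d i) = (\<Sum>i\<in>A. (w i - c) * ?d i)"
    by (simp add: left_diff_distrib sum_subtractf sum_distrib_left[symmetric])
  also have "\<dots> \<ge> 0" using assms(2) by (rule sum_nonneg)
  finally show ?thesis .
qed

text \<open>With t = lam pi tau^2, this is the tail mass on [tau, rc] of the caching distribution
  water-filled to level L (see \<open>integral_mixed_dist_density_water_tail\<close>).\<close>
definition water_tail :: "'a set \<Rightarrow> ('a \<Rightarrow> real) \<Rightarrow> real \<Rightarrow> real \<Rightarrow> real" where
  "water_tail I pr t L =
     (\<Sum>i\<in>I. pr i * exp (-(t * water_fill pr L i / water_volume I pr L)))
   - (\<Sum>i\<in>I. pr i * exp (- water_fill pr L i))"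

definition water_tail_deriv :: "'a set \<Rightarrow> ('a \<Rightarrow> real) \<Rightarrow> real \<Rightarrow> real \<Rightarrow> real" where
  "water_tail_deriv I pr t L =
     (\<Sum>i\<in>water_active I pr L.
        - (pr i * exp (-(t * (ln (pr i) - L) / water_volume I pr L))
           * (t * (real (card (water_active I pr L)) * (ln (pr i) - L) - water_volume I pr L)
              / (water_volume I pr L)^2))
        - pr i * exp (-(ln (pr i) - L)))"

lemma water_volume_eq_active:
  "finite I \<Longrightarrow> water_volume I pr L = (\<Sum>i\<in>water_active I pr L. ln (pr i) - L)"
  unfolding water_volume_def water_active_def water_fill_def
  by (rule sum.mono_neutral_cong_right) auto

lemma water_volume_antimono:
  "L2 \<le> L1 \<Longrightarrow> water_volume I pr L1 \<le> water_volume I pr L2"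
  unfolding water_volume_def water_fill_def by (rule sum_mono) auto

lemma continuous_on_water_tail:
  assumes "\<And>L. L \<in> X \<Longrightarrow> water_volume I pr L \<noteq> 0"
  shows "continuous_on X (water_tail I pr t)"
  unfolding water_tail_def water_volume_def water_fill_def
  using assms[unfolded water_volume_def water_fill_def]
  by (intro continuous_intros) auto

lemma water_tail_deriv_nonpos:
  assumes fin: "finite I" and pos: "\<And>i. i \<in> I \<Longrightarrow> pr i > 0"
    and V: "water_volume I pr L > 0" and t: "0 \<le> t" "t \<le> water_volume I pr L"
  shows "water_tail_deriv I pr t L \<le> 0"
proof -
  let ?A = "water_active I pr L" and ?V = "water_volume I pr L"
  let ?k = "real (card ?A)"
  define u where "u i = ln (pr i) - L" for i
  define \<theta> where "\<theta> = t / ?V"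
  have finA: "finite ?A" using fin unfolding water_active_def by auto
  have Vsum: "?V = (\<Sum>j\<in>?A. u j)" using water_volume_eq_active[OF fin] by (simp add: u_def)
  have k: "?k > 0" using V Vsum finA by (auto simp: card_gt_0_iff)
  have \<theta>: "0 \<le> \<theta>" "\<theta> \<le> 1" using t V by (auto simp: \<theta>_def)
  have w: "pr i * exp (-(t * u i / ?V)) = exp (L + (1 - \<theta>) * u i)" if "i \<in> ?A" for i
  proof -
    have "pr i * exp (-(t * u i / ?V)) = exp (ln (pr i) - \<theta> * u i)"
      using pos that by (simp add: water_active_def \<theta>_def exp_diff exp_minus field_simps)
    then show ?thesis by (simp add: u_def algebra_simps)
  qed
  text \<open>The weights exp (L + (1 - theta) u i) increase with u i, so they correlate positively
    with the deviations of u i from its mean.\<close>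
  have corr: "(\<Sum>i\<in>?A. pr i * exp (-(t * u i / ?V)) * (?k * u i - (\<Sum>j\<in>?A. u j))) \<ge> 0"
  proof (rule sum_mult_deviation_nonneg[OF finA, where c = "exp (L + (1 - \<theta>) * (?V / ?k))"])
    fix i assume i: "i \<in> ?A"
    have "u i \<ge> ?V / ?k \<longleftrightarrow> ?k * u i - ?V \<ge> 0" using k by (simp add: field_simps)
    moreover have "u i \<ge> ?V / ?k \<Longrightarrow> (1 - \<theta>) * (?V / ?k) \<le> (1 - \<theta>) * u i"
      and "u i \<le> ?V / ?k \<Longrightarrow> (1 - \<theta>) * u i \<le> (1 - \<theta>) * (?V / ?k)"
      using \<theta> by (simp_all add: mult_left_mono del: times_divide_eq_right)
    ultimately show "(pr i * exp (-(t * u i / ?V)) - exp (L + (1 - \<theta>) * (?V / ?k)))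
        * (?k * u i - (\<Sum>j\<in>?A. u j)) \<ge> 0"
      unfolding w[OF i] Vsum[symmetric]
      by (cases "u i \<ge> ?V / ?k") (auto intro: mult_nonneg_nonneg mult_nonpos_nonpos)
  qed
  have "water_tail_deriv I pr t L = (\<Sum>i\<in>?A. - (t / ?V^2)
        * (pr i * exp (-(t * u i / ?V)) * (?k * u i - ?V)) - pr i * exp (- u i))"
    unfolding water_tail_deriv_def u_def by (rule sum.cong) (simp_all add: field_simps)
  also have "\<dots> = - (t / ?V^2)
        * (\<Sum>i\<in>?A. pr i * exp (-(t * u i / ?V)) * (?k * u i - (\<Sum>j\<in>?A. u j)))
      - (\<Sum>i\<in>?A. pr i * exp (- u i))"
    by (simp add: sum_subtractf sum_distrib_left Vsum[symmetric])
  also have "\<dots> \<le> 0"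
  proof -
    have "(\<Sum>i\<in>?A. pr i * exp (- u i)) \<ge> 0"
      using pos by (intro sum_nonneg) (auto simp: water_active_def less_imp_le)
    moreover have "t / ?V^2 * (\<Sum>i\<in>?A. pr i * exp (-(t * u i / ?V)) * (?k * u i - (\<Sum>j\<in>?A. u j))) \<ge> 0"
      using corr t by simp
    ultimately show ?thesis by linarith
  qed
  finally show ?thesis .
qed

lemma water_active_locally_const:
  assumes fin: "finite I" and L0: "L0 \<notin> (\<lambda>i. ln (pr i)) ` I"
  obtains U where "open U" "L0 \<in> U" "\<And>l. l \<in> U \<Longrightarrow> water_active I pr l = water_active I pr L0"
proof
  define V where "V i = (if ln (pr i) > L0 then {..<ln (pr i)} else {ln (pr i)<..})" for i
  show "open (\<Inter>i\<in>I. V i)" unfolding V_def using fin by (intro open_INT) auto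
  show "L0 \<in> (\<Inter>i\<in>I. V i)" using L0 unfolding V_def by (auto simp: not_less order.order_iff_strict)
  show "water_active I pr l = water_active I pr L0" if l: "l \<in> (\<Inter>i\<in>I. V i)" for l
  proof -
    have "l < ln (pr i) \<longleftrightarrow> L0 < ln (pr i)" if "i \<in> I" for i
    proof -
      have "l \<in> V i" using l that by blast
      thus ?thesis unfolding V_def by (cases "L0 < ln (pr i)") auto
    qed
    thus ?thesis unfolding water_active_def by auto
  qed
qed

lemma has_field_derivative_water_tail:
  assumes fin: "finite I" and L0: "L0 \<notin> (\<lambda>i. ln (pr i)) ` I" and V: "water_volume I pr L0 > 0"
  shows "(water_tail I pr t has_field_derivative water_tail_deriv I pr t L0) (at L0)"
proof -
  obtain U where U: "open U" "L0 \<in> U"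
    and act: "\<And>l. l \<in> U \<Longrightarrow> water_active I pr l = water_active I pr L0"
    using water_active_locally_const[OF fin L0] by blast
  let ?A = "water_active I pr L0"
  define C where "C = (\<Sum>i\<in>?A. ln (pr i))"
  define k where "k = real (card ?A)"
  have finA: "finite ?A" using fin unfolding water_active_def by auto
  text \<open>Near L0 the active set is fixed, so the volume is affine and the tail is smooth.\<close>
  have vol: "water_volume I pr l = C - k * l" if "l \<in> U" for l
    using water_volume_eq_active[OF fin, of pr l] act[OF that] finA
    by (simp add: C_def k_def sum_subtractf)
  define g where "g l = (\<Sum>i\<in>?A. pr i * exp (-(t * (ln (pr i) - l) / (C - k * l)))
      - pr i * exp (-(ln (pr i) - l)))" for l
  have tail: "water_tail I pr t l = g l" if "l \<in> U" for l
  proof -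
    have same: "l < ln (pr i) \<longleftrightarrow> L0 < ln (pr i)" if "i \<in> I" for i
      using act[OF \<open>l \<in> U\<close>] that unfolding water_active_def by blast
    have "water_tail I pr t l = (\<Sum>i\<in>I. pr i * exp (-(t * water_fill pr l i / water_volume I pr l))
        - pr i * exp (- water_fill pr l i))"
      unfolding water_tail_def by (simp add: sum_subtractf)
    also have "\<dots> = (\<Sum>i\<in>?A. pr i * exp (-(t * water_fill pr l i / water_volume I pr l))
        - pr i * exp (- water_fill pr l i))"
    proof (rule sum.mono_neutral_right)
      show "\<forall>i\<in>I - ?A. pr i * exp (-(t * water_fill pr l i / water_volume I pr l))
          - pr i * exp (- water_fill pr l i) = 0"
      proof
        fix i assume "i \<in> I - ?A"
        hence "\<not> l < ln (pr i)" using same by (simp add: water_active_def)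
        hence "water_fill pr l i = 0" by (simp add: water_fill_def)
        thus "pr i * exp (-(t * water_fill pr l i / water_volume I pr l))
          - pr i * exp (- water_fill pr l i) = 0" by simp
      qed
    qed (use fin in \<open>auto simp: water_active_def\<close>)
    also have "\<dots> = g l"
      unfolding g_def vol[OF that] using same
      by (intro sum.cong) (auto simp: water_active_def water_fill_def)
    finally show ?thesis .
  qed
  have "C - k * L0 > 0" using V vol[OF U(2)] by simp
  hence "(g has_field_derivative (\<Sum>i\<in>?A. - (pr i * exp (-(t * (ln (pr i) - L0) / (C - k * L0)))
      * (t * (k * (ln (pr i) - L0) - (C - k * L0)) / (C - k * L0)^2))
      - pr i * exp (-(ln (pr i) - L0)))) (at L0)"
    unfolding g_def
    by (intro DERIV_sum) (auto intro!: derivative_eq_intros simp: field_simps power2_eq_square)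
  hence "(g has_field_derivative water_tail_deriv I pr t L0) (at L0)"
    unfolding water_tail_deriv_def vol[OF U(2)] k_def .
  thus ?thesis
    by (rule has_field_derivative_transform_within_open[OF _ U]) (simp add: tail)
qed

lemma water_tail_antimono:
  assumes fin: "finite I" and pos: "\<And>i. i \<in> I \<Longrightarrow> pr i > 0" and L: "L2 \<le> L1"
    and V: "water_volume I pr L1 > 0" and t: "0 \<le> t" "t \<le> water_volume I pr L1"
  shows "water_tail I pr t L1 \<le> water_tail I pr t L2"
proof -
  have Vge: "water_volume I pr l \<ge> water_volume I pr L1" if "l \<in> {L2..L1}" for l
    using water_volume_antimono[of l L1 I pr] that by auto
  have "(water_tail_deriv I pr t has_integral (water_tail I pr t L1 - water_tail I pr t L2)) {L2..L1}"
  proof (rule fundamental_theorem_of_calculus_interior_strong[where S = "(\<lambda>i. ln (pr i)) ` I"])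
    show "continuous_on {L2..L1} (water_tail I pr t)"
      using Vge V by (intro continuous_on_water_tail) force
    fix l assume l: "l \<in> {L2<..<L1} - (\<lambda>i. ln (pr i)) ` I"
    have "water_volume I pr l > 0" using Vge[of l] l V by auto
    then show "(water_tail I pr t has_vector_derivative water_tail_deriv I pr t l) (at l)"
      using has_field_derivative_water_tail[OF fin, of l pr t] l
      by (simp add: has_real_derivative_iff_has_vector_derivative)
  qed (use fin L in auto)
  moreover have "((\<lambda>_. 0::real) has_integral 0) {L2..L1}" by simp
  ultimately have "water_tail I pr t L1 - water_tail I pr t L2 \<le> 0"
  proof (rule has_integral_le)
    fix l assume "l \<in> {L2..L1}"
    then show "water_tail_deriv I pr t l \<le> 0"
      using Vge V t by (intro water_tail_deriv_nonpos[OF fin pos]) force+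
  qed
  thus ?thesis by simp
qed

section \<open>Integrating an increasing weight against measures with larger tails\<close>

lemma mono_on_superlevel_threshold:
  fixes E :: "real \<Rightarrow> real"
  assumes mono: "mono_on {0..b2} E" and b: "b1 \<le> b2" and ne: "\<exists>r\<in>{0..b1}. y \<le> E r"
  obtains \<tau> where "0 \<le> \<tau>" "\<tau> \<le> b1"
    and "\<And>r. r \<in> {0..b2} \<Longrightarrow> \<tau> < r \<Longrightarrow> y \<le> E r"
    and "\<And>r. r \<in> {0..b2} \<Longrightarrow> y \<le> E r \<Longrightarrow> \<tau> \<le> r"
proof
  let ?V = "{r\<in>{0..b1}. y \<le> E r}"
  have bdd: "bdd_below ?V" by (rule bdd_belowI[of _ 0]) auto
  have V: "?V \<noteq> {}" using ne by blast
  then obtain v where v: "v \<in> ?V" by blast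
  show "0 \<le> Inf ?V" by (rule cInf_greatest[OF V]) auto
  show "Inf ?V \<le> b1" using cInf_lower[OF v bdd] v by auto
  show "y \<le> E r" if "r \<in> {0..b2}" "Inf ?V < r" for r
  proof -
    obtain w where "w \<in> ?V" "w < r" using cInf_lessD[OF V \<open>Inf ?V < r\<close>] by blast
    hence "E w \<le> E r" using that b by (intro mono_onD[OF mono]) auto
    with \<open>w \<in> ?V\<close> show ?thesis by simp
  qed
  show "Inf ?V \<le> r" if "r \<in> {0..b2}" "y \<le> E r" for r
  proof (cases "r \<le> b1")
    case True
    with that show ?thesis by (intro cInf_lower[OF _ bdd]) auto
  qed (use \<open>Inf ?V \<le> b1\<close> in auto)
qed

lemma has_integral_threshold_cut:
  fixes g :: "real \<Rightarrow> real"
  assumes g: "continuous_on {0..b} g" and \<tau>: "0 \<le> \<tau>" "\<tau> \<le> b"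
    and above: "\<And>r. r \<in> {0..b} \<Longrightarrow> \<tau> < r \<Longrightarrow> P r"
    and below: "\<And>r. r \<in> {0..b} \<Longrightarrow> P r \<Longrightarrow> \<tau> \<le> r"
  shows "((\<lambda>r. if P r then g r else 0) has_integral integral {\<tau>..b} g) {0..b}"
proof -
  have "continuous_on {\<tau>..b} g" by (rule continuous_on_subset[OF g]) (use \<tau> in auto)
  hence "(g has_integral integral {\<tau>..b} g) {\<tau>..b}"
    by (intro integrable_integral integrable_continuous_interval)
  hence "(g has_integral integral {\<tau>..b} g) ({\<tau>..b} \<inter> {0..b})"
    using \<tau> by (simp add: Int_absorb2)
  hence restrict: "((\<lambda>r. if r \<in> {\<tau>..b} then g r else 0) has_integral integral {\<tau>..b} g) {0..b}"
    by (simp only: has_integral_restrict_Int)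
  have spike: "(if P r then g r else 0) = (if r \<in> {\<tau>..b} then g r else 0)"
    if "r \<in> {0..b} - {\<tau>}" for r
    using that above[of r] below[of r] by (cases "P r") auto
  show ?thesis by (rule has_integral_spike_finite[where S = "{\<tau>}", OF _ spike restrict]) simp
qed

lemma superlevel_cut_integrable:
  fixes E g :: "real \<Rightarrow> real"
  assumes mono: "mono_on {0..b} E" and g: "continuous_on {0..b} g"
  shows "(\<lambda>r. if y \<le> E r then g r else 0) integrable_on {0..b}"
proof (cases "\<exists>r\<in>{0..b}. y \<le> E r")
  case True
  then obtain \<tau> where \<tau>: "0 \<le> \<tau>" "\<tau> \<le> b"
    and above: "\<And>r. r \<in> {0..b} \<Longrightarrow> \<tau> < r \<Longrightarrow> y \<le> E r"
    and below: "\<And>r. r \<in> {0..b} \<Longrightarrow> y \<le> E r \<Longrightarrow> \<tau> \<le> r"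
    using mono_on_superlevel_threshold[OF mono order_refl] by blast
  have "((\<lambda>r. if y \<le> E r then g r else 0) has_integral integral {\<tau>..b} g) {0..b}"
    using above below by (rule has_integral_threshold_cut[OF g \<tau>])
  thus ?thesis by (rule has_integral_integrable)
next
  case False
  thus ?thesis by (intro integrable_eq[OF integrable_0]) auto
qed

lemma superlevel_cut_integral_le:
  fixes E g1 g2 :: "real \<Rightarrow> real"
  assumes b: "0 \<le> b1" "b1 \<le> b2" and mono: "mono_on {0..b2} E"
    and g1: "continuous_on {0..b1} g1" and g2: "continuous_on {0..b2} g2"
    and g2_nonneg: "\<And>r. r \<in> {0..b2} \<Longrightarrow> 0 \<le> g2 r"
    and tails: "\<And>\<tau>. \<tau> \<in> {0..b1} \<Longrightarrow> integral {\<tau>..b1} g1 \<le> integral {\<tau>..b2} g2"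
  shows "integral {0..b1} (\<lambda>r. if y \<le> E r then g1 r else 0)
       \<le> integral {0..b2} (\<lambda>r. if y \<le> E r then g2 r else 0)"
proof (cases "\<exists>r\<in>{0..b1}. y \<le> E r")
  case True
  then obtain \<tau> where \<tau>: "0 \<le> \<tau>" "\<tau> \<le> b1"
    and above: "\<And>r. r \<in> {0..b2} \<Longrightarrow> \<tau> < r \<Longrightarrow> y \<le> E r"
    and below: "\<And>r. r \<in> {0..b2} \<Longrightarrow> y \<le> E r \<Longrightarrow> \<tau> \<le> r"
    using mono_on_superlevel_threshold[OF mono b(2)] by blast
  have "integral {0..b1} (\<lambda>r. if y \<le> E r then g1 r else 0) = integral {\<tau>..b1} g1"
    using b by (intro integral_unique has_integral_threshold_cut[OF g1 \<tau>])
      (auto intro: above below)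
  also have "\<dots> \<le> integral {\<tau>..b2} g2" using tails \<tau> by auto
  also have "\<dots> = integral {0..b2} (\<lambda>r. if y \<le> E r then g2 r else 0)"
    using \<tau> b by (intro integral_unique[symmetric] has_integral_threshold_cut[OF g2])
      (auto intro: above below)
  finally show ?thesis .
next
  case False
  hence "integral {0..b1} (\<lambda>r. if y \<le> E r then g1 r else 0) = integral {0..b1} (\<lambda>r. 0)"
    by (intro integral_cong) auto
  also have "\<dots> = 0" by simp
  also have "0 \<le> integral {0..b2} (\<lambda>r. if y \<le> E r then g2 r else 0)"
    using g2_nonneg by (intro integral_nonneg superlevel_cut_integrable[OF mono g2]) auto
  finally show ?thesis .
qed

lemma staircase_bounds:
  fixes \<delta> e :: real and N :: nat
  assumes \<delta>: "\<delta> > 0" and e: "0 \<le> e" "e \<le> real N * \<delta>"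
  shows "(\<Sum>k\<in>{1..N}. \<delta> * (if real k * \<delta> \<le> e then 1 else 0)) \<le> e"
    and "e \<le> \<delta> + (\<Sum>k\<in>{1..N}. \<delta> * (if real k * \<delta> \<le> e then 1 else 0))"
proof -
  define m where "m = nat \<lfloor>e / \<delta>\<rfloor>"
  have "0 \<le> e / \<delta>" using e \<delta> by simp
  hence m: "real m \<le> e / \<delta>" "e / \<delta> < real m + 1" unfolding m_def by linarith+
  have iff: "real k * \<delta> \<le> e \<longleftrightarrow> k \<le> m" for k
  proof -
    have "real k * \<delta> \<le> e \<longleftrightarrow> real k \<le> e / \<delta>" using \<delta> by (simp add: field_simps)
    also have "\<dots> \<longleftrightarrow> k \<le> m" using m unfolding m_def by linarith
    finally show ?thesis .
  qed
  have "e / \<delta> \<le> real N" using e \<delta> by (simp add: divide_le_eq)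
  hence "m \<le> N" using m by linarith
  hence levels: "{k\<in>{1..N}. real k * \<delta> \<le> e} = {1..m}" by (auto simp: iff)
  have "(\<Sum>k\<in>{1..N}. \<delta> * (if real k * \<delta> \<le> e then 1 else 0))
      = (\<Sum>k\<in>{1..N}. if real k * \<delta> \<le> e then \<delta> else 0)"
    by (rule sum.cong) auto
  also have "\<dots> = (\<Sum>k\<in>{k\<in>{1..N}. real k * \<delta> \<le> e}. \<delta>)"
    by (rule sum.inter_filter[symmetric]) simp
  finally have stair: "(\<Sum>k\<in>{1..N}. \<delta> * (if real k * \<delta> \<le> e then 1 else 0)) = real m * \<delta>"
    unfolding levels by simp
  show "(\<Sum>k\<in>{1..N}. \<delta> * (if real k * \<delta> \<le> e then 1 else 0)) \<le> e"
    using m \<delta> unfolding stair by (simp add: le_divide_eq)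
  show "e \<le> \<delta> + (\<Sum>k\<in>{1..N}. \<delta> * (if real k * \<delta> \<le> e then 1 else 0))"
    using m \<delta> unfolding stair by (simp add: divide_less_eq algebra_simps)
qed

lemma mono_mult_continuous_integrable:
  fixes E g :: "real \<Rightarrow> real"
  assumes mono: "mono_on {0..b} E" and g: "continuous_on {0..b} g"
  shows "(\<lambda>r. E r * g r) integrable_on {0..b}"
proof -
  have "space lborel = space lebesgue" "sets borel \<subseteq> sets lebesgue" by force+
  hence "E \<in> borel_measurable (lebesgue_on {0..b})"
    by (metis mono borel_measurable_mono_on_fnc borel_measurable_subalgebra mono_restrict_space
        space_lborel space_restrict_space)
  moreover have "bounded (E ` {0..b})"
  proof (cases "0 \<le> b")
    case True
    hence "E ` {0..b} \<subseteq> {E 0..E b}" using mono by (auto simp: mono_on_def)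
    thus ?thesis using bounded_closed_interval bounded_subset by blast
  qed simp
  ultimately have "(\<lambda>r. E r * g r) absolutely_integrable_on {0..b}"
    by (intro absolutely_integrable_bounded_measurable_product_real
        absolutely_integrable_continuous_real g) auto
  thus ?thesis by (simp add: absolutely_integrable_on_def)
qed

lemma integral_staircase_le:
  fixes E g :: "real \<Rightarrow> real"
  assumes mono: "mono_on {0..b} E" and \<delta>: "\<delta> > 0"
    and E: "\<And>r. r \<in> {0..b} \<Longrightarrow> 0 \<le> E r \<and> E r \<le> real N * \<delta>"
    and g: "continuous_on {0..b} g" "\<And>r. r \<in> {0..b} \<Longrightarrow> 0 \<le> g r"
  shows "(\<Sum>k\<in>{1..N}. \<delta> * integral {0..b} (\<lambda>r. if real k * \<delta> \<le> E r then g r else 0))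
       \<le> integral {0..b} (\<lambda>r. E r * g r)"
proof -
  have cut: "(\<lambda>r. \<delta> * (if real k * \<delta> \<le> E r then g r else 0)) integrable_on {0..b}" for k
    by (intro integrable_on_mult_right superlevel_cut_integrable[OF mono g(1)])
  have "(\<Sum>k\<in>{1..N}. \<delta> * integral {0..b} (\<lambda>r. if real k * \<delta> \<le> E r then g r else 0))
      = integral {0..b} (\<lambda>r. \<Sum>k\<in>{1..N}. \<delta> * (if real k * \<delta> \<le> E r then g r else 0))"
    by (subst integral_sum) (use cut in auto)
  also have "\<dots> \<le> integral {0..b} (\<lambda>r. E r * g r)"
  proof (rule integral_le)
    show "(\<lambda>r. \<Sum>k\<in>{1..N}. \<delta> * (if real k * \<delta> \<le> E r then g r else 0)) integrable_on {0..b}"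
      by (rule integrable_sum) (use cut in auto)
    show "(\<lambda>r. E r * g r) integrable_on {0..b}" by (rule mono_mult_continuous_integrable[OF mono g(1)])
    fix r assume r: "r \<in> {0..b}"
    have "(\<Sum>k\<in>{1..N}. \<delta> * (if real k * \<delta> \<le> E r then g r else 0))
        = (\<Sum>k\<in>{1..N}. \<delta> * (if real k * \<delta> \<le> E r then 1 else 0)) * g r"
      unfolding sum_distrib_right by (rule sum.cong) auto
    also have "\<dots> \<le> E r * g r"
      using staircase_bounds(1)[OF \<delta>] E[OF r] g(2)[OF r] by (intro mult_right_mono) auto
    finally show "(\<Sum>k\<in>{1..N}. \<delta> * (if real k * \<delta> \<le> E r then g r else 0)) \<le> E r * g r" .
  qed
  finally show ?thesis .
qed

lemma integral_le_staircase:
  fixes E g :: "real \<Rightarrow> real"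
  assumes mono: "mono_on {0..b} E" and \<delta>: "\<delta> > 0"
    and E: "\<And>r. r \<in> {0..b} \<Longrightarrow> 0 \<le> E r \<and> E r \<le> real N * \<delta>"
    and g: "continuous_on {0..b} g" "\<And>r. r \<in> {0..b} \<Longrightarrow> 0 \<le> g r"
  shows "integral {0..b} (\<lambda>r. E r * g r)
       \<le> \<delta> * integral {0..b} g
         + (\<Sum>k\<in>{1..N}. \<delta> * integral {0..b} (\<lambda>r. if real k * \<delta> \<le> E r then g r else 0))"
proof -
  have cut: "(\<lambda>r. \<delta> * (if real k * \<delta> \<le> E r then g r else 0)) integrable_on {0..b}" for k
    by (intro integrable_on_mult_right superlevel_cut_integrable[OF mono g(1)])
  have int_g: "(\<lambda>r. \<delta> * g r) integrable_on {0..b}"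
    by (intro integrable_on_mult_right integrable_continuous_interval g(1))
  have "integral {0..b} (\<lambda>r. E r * g r)
      \<le> integral {0..b} (\<lambda>r. \<delta> * g r + (\<Sum>k\<in>{1..N}. \<delta> * (if real k * \<delta> \<le> E r then g r else 0)))"
  proof (rule integral_le)
    show "(\<lambda>r. E r * g r) integrable_on {0..b}" by (rule mono_mult_continuous_integrable[OF mono g(1)])
    show "(\<lambda>r. \<delta> * g r + (\<Sum>k\<in>{1..N}. \<delta> * (if real k * \<delta> \<le> E r then g r else 0)))
        integrable_on {0..b}"
      by (intro integrable_add int_g integrable_sum) (use cut in auto)
    fix r assume r: "r \<in> {0..b}"
    have "E r * g r \<le> (\<delta> + (\<Sum>k\<in>{1..N}. \<delta> * (if real k * \<delta> \<le> E r then 1 else 0))) * g r"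
      using staircase_bounds(2)[OF \<delta>] E[OF r] g(2)[OF r] by (intro mult_right_mono) auto
    also have "\<dots> = \<delta> * g r + (\<Sum>k\<in>{1..N}. \<delta> * (if real k * \<delta> \<le> E r then g r else 0))"
      unfolding distrib_right sum_distrib_right by (intro arg_cong2[where f = "(+)"] sum.cong) auto
    finally show "E r * g r \<le> \<delta> * g r + (\<Sum>k\<in>{1..N}. \<delta> * (if real k * \<delta> \<le> E r then g r else 0))" .
  qed
  also have "\<dots> = \<delta> * integral {0..b} g
      + (\<Sum>k\<in>{1..N}. \<delta> * integral {0..b} (\<lambda>r. if real k * \<delta> \<le> E r then g r else 0))"
    by (subst integral_add) (use int_g cut in \<open>auto intro: integrable_sum simp: integral_sum\<close>)
  finally show ?thesis .
qed

lemma integral_mono_weight_le_of_tails: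
  fixes E g1 g2 :: "real \<Rightarrow> real"
  assumes b: "0 \<le> b1" "b1 \<le> b2" and mono: "mono_on {0..b2} E"
    and E_nonneg: "\<And>r. r \<in> {0..b2} \<Longrightarrow> 0 \<le> E r"
    and g1: "continuous_on {0..b1} g1" "\<And>r. r \<in> {0..b1} \<Longrightarrow> 0 \<le> g1 r"
    and g2: "continuous_on {0..b2} g2" "\<And>r. r \<in> {0..b2} \<Longrightarrow> 0 \<le> g2 r"
    and tails: "\<And>\<tau>. \<tau> \<in> {0..b1} \<Longrightarrow> integral {\<tau>..b1} g1 \<le> integral {\<tau>..b2} g2"
  shows "integral {0..b1} (\<lambda>r. E r * g1 r) \<le> integral {0..b2} (\<lambda>r. E r * g2 r)"
proof (rule field_le_epsilon)
  fix e :: real assume e: "e > 0"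
  define C where "C = integral {0..b1} g1"
  have C: "0 \<le> C" unfolding C_def using g1 by (intro integral_nonneg integrable_continuous_interval) auto
  define \<delta> where "\<delta> = e / (C + 1)"
  have \<delta>: "\<delta> > 0" "\<delta> * C \<le> e" using e C by (auto simp: \<delta>_def field_simps)
  define N where "N = nat \<lceil>E b2 / \<delta>\<rceil>"
  have "E b2 / \<delta> \<le> real N" unfolding N_def by linarith
  hence "E b2 \<le> real N * \<delta>" using \<delta> by (simp add: divide_le_eq)
  hence E2: "0 \<le> E r \<and> E r \<le> real N * \<delta>" if "r \<in> {0..b2}" for r
    using E_nonneg[OF that] mono_onD[OF mono that, of b2] that b by auto
  have mono1: "mono_on {0..b1} E" using mono by (rule mono_on_subset) (use b in auto)
  have "integral {0..b1} (\<lambda>r. E r * g1 r) \<le> \<delta> * C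
      + (\<Sum>k\<in>{1..N}. \<delta> * integral {0..b1} (\<lambda>r. if real k * \<delta> \<le> E r then g1 r else 0))"
    unfolding C_def using E2 b by (intro integral_le_staircase[OF mono1 \<delta>(1) _ g1]) auto
  also have "\<dots> \<le> \<delta> * C
      + (\<Sum>k\<in>{1..N}. \<delta> * integral {0..b2} (\<lambda>r. if real k * \<delta> \<le> E r then g2 r else 0))"
    using \<delta> by (intro add_left_mono sum_mono mult_left_mono
        superlevel_cut_integral_le[OF b mono g1(1) g2 tails]) auto
  also have "\<dots> \<le> e + integral {0..b2} (\<lambda>r. E r * g2 r)"
    using \<delta>(2) integral_staircase_le[OF mono \<delta>(1) E2 g2] by linarith
  finally show "integral {0..b1} (\<lambda>r. E r * g1 r) \<le> integral {0..b2} (\<lambda>r. E r * g2 r) + e"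
    by simp
qed

section \<open>The minimal transmission energy\<close>

lemma energy_pos:
  assumes "F > 0" "W > 0" "sigma2 > 0" "\<eta> > 0" "Pc > 0" "r > 0" "Pt > 0"
  shows "energy F W sigma2 \<eta> Pc \<alpha> r Pt > 0"
proof -
  have "Pt * r powr (-\<alpha>) / sigma2 > 0" using assms by simp
  hence "log 2 (1 + Pt * r powr (-\<alpha>) / sigma2) > 0" by simp
  thus ?thesis using assms unfolding energy_def by (intro mult_pos_pos divide_pos_pos add_pos_pos) auto
qed

lemma energy_mono_distance:
  assumes "F > 0" "W > 0" "sigma2 > 0" "\<eta> > 0" "Pc > 0" "\<alpha> > 0" "0 < r1" "r1 \<le> r2" "Pt > 0"
  shows "energy F W sigma2 \<eta> Pc \<alpha> r1 Pt \<le> energy F W sigma2 \<eta> Pc \<alpha> r2 Pt"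
proof -
  have "r2 powr (-\<alpha>) \<le> r1 powr (-\<alpha>)" using assms by (intro powr_mono2') auto
  hence "Pt * r2 powr (-\<alpha>) / sigma2 \<le> Pt * r1 powr (-\<alpha>) / sigma2"
    using assms by (intro divide_right_mono mult_left_mono) auto
  moreover have snr2: "Pt * r2 powr (-\<alpha>) / sigma2 > 0" using assms by simp
  ultimately have "log 2 (1 + Pt * r2 powr (-\<alpha>) / sigma2) \<le> log 2 (1 + Pt * r1 powr (-\<alpha>) / sigma2)"
    by simp
  moreover have "log 2 (1 + Pt * r2 powr (-\<alpha>) / sigma2) > 0" using snr2 by simp
  ultimately show ?thesis
    unfolding energy_def using assms
    by (intro mult_right_mono divide_left_mono mult_left_mono mult_pos_pos) auto
qed

text \<open>At r = 0 the received SNR is 0 powr (-alpha) = 0, so the rate vanishes and the energy is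
  F / 0 = 0 by the division convention; this junk value is what makes E_c^* monotone on [0, oo).\<close>
lemma min_energy_zero:
  assumes "Pmax > 0"
  shows "min_energy F W sigma2 \<eta> Pc Pmax \<alpha> 0 = 0"
proof -
  have "(\<lambda>Pt. energy F W sigma2 \<eta> Pc \<alpha> 0 Pt) ` {0<..Pmax} = {0}"
    using assms by (auto simp: energy_def)
  thus ?thesis unfolding min_energy_def by simp
qed

context
  fixes F W sigma2 \<eta> Pc Pmax \<alpha> :: real
  assumes pos: "F > 0" "W > 0" "sigma2 > 0" "\<eta> > 0" "Pc > 0" "Pmax > 0" "\<alpha> > 0"
begin

lemma min_energy_nonneg:
  assumes "r \<ge> 0"
  shows "min_energy F W sigma2 \<eta> Pc Pmax \<alpha> r \<ge> 0"
proof (cases "r = 0")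
  case False
  then show ?thesis
    unfolding min_energy_def using pos assms
    by (intro cInf_greatest) (auto intro!: less_imp_le energy_pos)
qed (simp add: min_energy_zero pos)

lemma mono_on_min_energy: "mono_on {0..} (min_energy F W sigma2 \<eta> Pc Pmax \<alpha>)"
proof (rule mono_onI)
  fix r s :: real assume rs: "r \<in> {0..}" "s \<in> {0..}" "r \<le> s"
  show "min_energy F W sigma2 \<eta> Pc Pmax \<alpha> r \<le> min_energy F W sigma2 \<eta> Pc Pmax \<alpha> s"
  proof (cases "r = 0")
    case True
    thus ?thesis using min_energy_nonneg rs by (simp add: min_energy_zero pos)
  next
    case False
    hence r: "r > 0" using rs by auto
    show ?thesis unfolding min_energy_def
    proof (rule cInf_mono)
      show "bdd_below ((\<lambda>Pt. energy F W sigma2 \<eta> Pc \<alpha> r Pt) ` {0<..Pmax})"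
        using pos r by (intro bdd_belowI[of _ 0]) (auto intro!: less_imp_le energy_pos)
      fix e assume "e \<in> (\<lambda>Pt. energy F W sigma2 \<eta> Pc \<alpha> s Pt) ` {0<..Pmax}"
      then obtain Pt where Pt: "Pt \<in> {0<..Pmax}" and e: "e = energy F W sigma2 \<eta> Pc \<alpha> s Pt"
        by blast
      have "energy F W sigma2 \<eta> Pc \<alpha> r Pt \<le> e"
        unfolding e using Pt by (intro energy_mono_distance[OF pos(1-5,7) r rs(3)]) simp
      then show "\<exists>e'\<in>(\<lambda>Pt. energy F W sigma2 \<eta> Pc \<alpha> r Pt) ` {0<..Pmax}. e' \<le> e"
        using Pt by blast
    qed (use pos in auto)
  qed
qed

end

section \<open>Monotonicity in the collaboration distance\<close>

lemma has_integral_dist_density: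
  assumes "\<tau> \<le> b"
  shows "(dist_density lam q has_integral
           exp (- lam * q * pi * \<tau>^2) - exp (- lam * q * pi * b^2)) {\<tau>..b}"
proof -
  have "((\<lambda>r. - exp (- lam * q * pi * r^2)) has_real_derivative dist_density lam q r) (at r)" for r
    unfolding dist_density_def by (auto intro!: derivative_eq_intros simp: algebra_simps)
  hence "(dist_density lam q has_integral
           (- exp (- lam * q * pi * b^2)) - (- exp (- lam * q * pi * \<tau>^2))) {\<tau>..b}"
    using assms
    by (intro fundamental_theorem_of_calculus)
      (auto simp: has_real_derivative_iff_has_vector_derivative intro: has_vector_derivative_at_within)
  thus ?thesis by simp
qed

definition mixed_dist_density :: "nat \<Rightarrow> real \<Rightarrow> real \<Rightarrow> (nat \<Rightarrow> real) \<Rightarrow> real \<Rightarrow> real" where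
  "mixed_dist_density Nf \<beta> lam pc r = (\<Sum>i=1..Nf. zipf Nf \<beta> i * dist_density lam (pc i) r)"

lemma continuous_on_mixed_dist_density: "continuous_on S (mixed_dist_density Nf \<beta> lam pc)"
  unfolding mixed_dist_density_def dist_density_def by (intro continuous_intros)

lemma mixed_dist_density_nonneg:
  assumes "lam > 0" "r \<ge> 0" "feasible_cache Nf pc"
  shows "mixed_dist_density Nf \<beta> lam pc r \<ge> 0"
  unfolding mixed_dist_density_def dist_density_def using assms zipf_pos
  by (intro sum_nonneg mult_nonneg_nonneg) (auto intro: less_imp_le simp: feasible_cache_def)

lemma integral_mixed_dist_density:
  assumes "\<tau> \<le> b"
  shows "integral {\<tau>..b} (mixed_dist_density Nf \<beta> lam pc) =
    (\<Sum>i=1..Nf. zipf Nf \<beta> i * (exp (- lam * pc i * pi * \<tau>^2) - exp (- lam * pc i * pi * b^2)))"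
  unfolding mixed_dist_density_def
  by (intro integral_unique has_integral_sum has_integral_mult_right has_integral_dist_density assms)
    simp

lemma avg_energy_eq_integral:
  assumes "mono_on {0..rc} (min_energy F W sigma2 \<eta> Pc Pmax \<alpha>)"
  shows "avg_energy Nf \<beta> lam F W sigma2 \<eta> Pc Pmax \<alpha> pc rc
       = integral {0..rc} (\<lambda>r. min_energy F W sigma2 \<eta> Pc Pmax \<alpha> r * mixed_dist_density Nf \<beta> lam pc r)"
proof -
  let ?E = "min_energy F W sigma2 \<eta> Pc Pmax \<alpha>"
  have int: "(\<lambda>r. zipf Nf \<beta> i * (?E r * dist_density lam (pc i) r)) integrable_on {0..rc}" for i
    unfolding dist_density_def
    by (intro integrable_on_mult_right mono_mult_continuous_integrable assms continuous_intros)
  have "integral {0..rc} (\<lambda>r. ?E r * mixed_dist_density Nf \<beta> lam pc r)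
      = integral {0..rc} (\<lambda>r. \<Sum>i=1..Nf. zipf Nf \<beta> i * (?E r * dist_density lam (pc i) r))"
    unfolding mixed_dist_density_def by (simp add: sum_distrib_left algebra_simps)
  also have "\<dots> = avg_energy Nf \<beta> lam F W sigma2 \<eta> Pc Pmax \<alpha> pc rc"
    unfolding avg_energy_def using int by (subst integral_sum) auto
  finally show ?thesis by simp
qed

text \<open>For a water-filled distribution the poured amounts are lam pi rc^2 pc(i), so the
  exponents at distance tau are the fraction tau^2 / rc^2 of them.\<close>
lemma integral_mixed_dist_density_water_tail:
  assumes lam: "lam > 0" and rc: "rc > 0" and \<tau>: "\<tau> \<le> rc"
    and fill: "\<forall>i\<in>{1..Nf}. pc i * (lam * pi * rc^2) = water_fill (zipf Nf \<beta>) L i"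
    and vol: "water_volume {1..Nf} (zipf Nf \<beta>) L = lam * pi * rc^2"
  shows "integral {\<tau>..rc} (mixed_dist_density Nf \<beta> lam pc)
       = water_tail {1..Nf} (zipf Nf \<beta>) (lam * pi * \<tau>^2) L"
proof -
  have x: "lam * pi * rc^2 > 0" using lam rc by simp
  have "integral {\<tau>..rc} (mixed_dist_density Nf \<beta> lam pc)
      = (\<Sum>i=1..Nf. zipf Nf \<beta> i
           * exp (-(lam * pi * \<tau>^2 * water_fill (zipf Nf \<beta>) L i / water_volume {1..Nf} (zipf Nf \<beta>) L))
         - zipf Nf \<beta> i * exp (- water_fill (zipf Nf \<beta>) L i))"
    unfolding integral_mixed_dist_density[OF \<tau>] vol
  proof (rule sum.cong)
    fix i assume "i \<in> {1..Nf}"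
    hence "water_fill (zipf Nf \<beta>) L i = pc i * (lam * pi * rc^2)" using fill by simp
    moreover have "lam * pi * \<tau>^2 * (pc i * (lam * pi * rc^2)) / (lam * pi * rc^2) = lam * pc i * pi * \<tau>^2"
      using x rc by (simp add: field_simps)
    ultimately show "zipf Nf \<beta> i * (exp (- lam * pc i * pi * \<tau>^2) - exp (- lam * pc i * pi * rc^2))
        = zipf Nf \<beta> i * exp (-(lam * pi * \<tau>^2 * water_fill (zipf Nf \<beta>) L i / (lam * pi * rc^2)))
          - zipf Nf \<beta> i * exp (- water_fill (zipf Nf \<beta>) L i)"
      by (simp add: right_diff_distrib mult_ac)
  qed simp
  also have "\<dots> = water_tail {1..Nf} (zipf Nf \<beta>) (lam * pi * \<tau>^2) L"
    unfolding water_tail_def by (simp add: sum_subtractf)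
  finally show ?thesis .
qed

lemma mixed_dist_density_tail_mono:
  assumes lam: "lam > 0" and r: "0 < r1" "r1 < r2"
    and opt1: "opt_cache Nf \<beta> lam r1 p1" and opt2: "opt_cache Nf \<beta> lam r2 p2"
    and \<tau>: "0 \<le> \<tau>" "\<tau> \<le> r1"
  shows "integral {\<tau>..r1} (mixed_dist_density Nf \<beta> lam p1)
       \<le> integral {\<tau>..r2} (mixed_dist_density Nf \<beta> lam p2)"
proof -
  obtain L1 where fill1: "\<forall>i\<in>{1..Nf}. p1 i * (lam * pi * r1^2) = water_fill (zipf Nf \<beta>) L1 i"
    and vol1: "water_volume {1..Nf} (zipf Nf \<beta>) L1 = lam * pi * r1^2"
    using opt_cache_water_filling[OF lam r(1) opt1] by blast
  obtain L2 where fill2: "\<forall>i\<in>{1..Nf}. p2 i * (lam * pi * r2^2) = water_fill (zipf Nf \<beta>) L2 i"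
    and vol2: "water_volume {1..Nf} (zipf Nf \<beta>) L2 = lam * pi * r2^2"
    using opt_cache_water_filling[OF lam _ opt2] r by auto
  have "lam * pi * r1^2 < lam * pi * r2^2" using lam r by (simp add: power_strict_mono)
  hence "L2 \<le> L1" using water_volume_antimono[of L1 L2 "{1..Nf}" "zipf Nf \<beta>"] vol1 vol2 by force
  moreover have "lam * pi * \<tau>^2 \<le> lam * pi * r1^2" using lam \<tau> by (simp add: power_mono)
  ultimately have "water_tail {1..Nf} (zipf Nf \<beta>) (lam * pi * \<tau>^2) L1
      \<le> water_tail {1..Nf} (zipf Nf \<beta>) (lam * pi * \<tau>^2) L2"
    using lam r vol1 by (intro water_tail_antimono) (auto intro: zipf_pos)
  thus ?thesis
    using integral_mixed_dist_density_water_tail[OF lam r(1) \<tau>(2) fill1 vol1]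
      integral_mixed_dist_density_water_tail[OF lam _ _ fill2 vol2] r \<tau> by simp
qed

lemma offload_opt_mono:
  assumes lam: "lam > 0" and r: "0 < r1" "r1 \<le> r2"
    and opt1: "opt_cache Nf \<beta> lam r1 p1" and opt2: "opt_cache Nf \<beta> lam r2 p2"
  shows "offload Nf \<beta> lam p1 r1 \<le> offload Nf \<beta> lam p2 r2"
proof -
  have "lam * pi * r1^2 \<le> lam * pi * r2^2" using lam r by (simp add: power_mono)
  hence "offload Nf \<beta> lam p1 r1 \<le> offload Nf \<beta> lam p1 r2"
    using opt1 zipf_pos unfolding offload_eq_sum opt_cache_def feasible_cache_def
    by (intro sum_mono mult_left_mono) (auto intro: less_imp_le mult_left_mono)
  also have "\<dots> \<le> offload Nf \<beta> lam p2 r2"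
    using opt1 opt2 by (simp add: opt_cache_def)
  finally show ?thesis .
qed

lemma avg_energy_opt_mono:
  assumes pos: "F > 0" "W > 0" "sigma2 > 0" "\<eta> > 0" "Pc > 0" "Pmax > 0" "\<alpha> > 0"
    and lam: "lam > 0" and r: "0 < r1" "r1 < r2"
    and opt1: "opt_cache Nf \<beta> lam r1 p1" and opt2: "opt_cache Nf \<beta> lam r2 p2"
  shows "avg_energy Nf \<beta> lam F W sigma2 \<eta> Pc Pmax \<alpha> p1 r1
       \<le> avg_energy Nf \<beta> lam F W sigma2 \<eta> Pc Pmax \<alpha> p2 r2"
proof -
  let ?E = "min_energy F W sigma2 \<eta> Pc Pmax \<alpha>"
  have mono: "mono_on {0..b} ?E" for b
    using mono_on_min_energy[OF pos] by (rule mono_on_subset) auto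
  have feas: "feasible_cache Nf p1" "feasible_cache Nf p2"
    using opt1 opt2 by (simp_all add: opt_cache_def)
  have "integral {0..r1} (\<lambda>r. ?E r * mixed_dist_density Nf \<beta> lam p1 r)
      \<le> integral {0..r2} (\<lambda>r. ?E r * mixed_dist_density Nf \<beta> lam p2 r)"
    using r lam feas
    by (intro integral_mono_weight_le_of_tails mono continuous_on_mixed_dist_density
        min_energy_nonneg[OF pos] mixed_dist_density_nonneg
        mixed_dist_density_tail_mono[OF lam r opt1 opt2]) auto
  thus ?thesis using avg_energy_eq_integral[OF mono] by simp
qed

theorem proposition3:
  fixes Nf :: nat and \<beta> lam F W sigma2 \<eta> Pc Pmax \<alpha> :: real
    and pcs :: "real \<Rightarrow> nat \<Rightarrow> real"
  assumes "Nf \<ge> 1" and "\<beta> > 0" and "lam > 0"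
    and "F > 0" and "W > 0" and "sigma2 > 0" and "\<eta> > 0" and "Pc > 0" and "Pmax > 0" and "\<alpha> > 0"
    and opt: "\<And>rc. rc > 0 \<Longrightarrow> opt_cache Nf \<beta> lam rc (pcs rc)"
  shows "mono_on {0<..} (\<lambda>rc. offload Nf \<beta> lam (pcs rc) rc)
       \<and> mono_on {0<..} (\<lambda>rc. avg_energy Nf \<beta> lam F W sigma2 \<eta> Pc Pmax \<alpha> (pcs rc) rc)"
proof (intro conjI mono_onI)
  fix r s :: real assume "r \<in> {0<..}" "s \<in> {0<..}" "r \<le> s"
  then show "offload Nf \<beta> lam (pcs r) r \<le> offload Nf \<beta> lam (pcs s) s"
    using assms by (intro offload_opt_mono) auto
  show "avg_energy Nf \<beta> lam F W sigma2 \<eta> Pc Pmax \<alpha> (pcs r) r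
      \<le> avg_energy Nf \<beta> lam F W sigma2 \<eta> Pc Pmax \<alpha> (pcs s) s"
    using \<open>r \<le> s\<close> \<open>r \<in> {0<..}\<close> assms
    by (cases "r = s") (auto intro: avg_energy_opt_mono)
qed

end
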